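(* For any skew-symmetric matrix $M$ (with labels $A$), $\sum_{\mathsf{I}\subseteq A}\operatorname{Pf}(M_{\mathsf{I}})\langle\mathsf{I}|$ and $\sum_{\mathsf{I}\subseteq A}\operatorname{Pf}(M_{\bar{\mathsf{I}}})|\mathsf{I}\rangle$ are morphisms of $\mathscr{P}$. Consequently $\mathscr{P}$ is a dagger monoidal category (with the usual vector space dagger).
   Context: For $i\in\mathbb{N}$, let $V_i\cong\mathbb{C}^2$ have orthonormal basis $v_{i,0},v_{i,1}$, and for $\mathsf{N}\subset\mathbb{N}$ let $V_{\mathsf{N}}=\bigotimes_{i\in\mathsf{N}}V_i$. For a skew-symmetric matrix $M$ whose rows and columns carry the same labels $\mathsf{N}$ in the same order, define $\operatorname{sPf}(M)=\sum_{\mathsf{I}\subseteq\mathsf{N}}\operatorname{Pf}(M_{\mathsf{I}})|\mathsf{I}\rangle$ and $\operatorname{sPf}^{\vee}(M)=\sum_{\mathsf{I}\subseteq\mathsf{N}}\operatorname{Pf}(M_{\bar{\mathsf{I}}})\langle\mathsf{I}|$, where $M_{\mathsf{I}}$ is the principal submatrix with labels $\mathsf{I}$, $M_{\bar{\mathsf{I}}}$ is the principal submatrix with the rows and columns labeled $\mathsf{I}$ removed, $|\mathsf{I}\rangle=\bigotimes_{i\in\mathsf{N}}v_{i,\chi(i,\mathsf{I})}$, $\langle\mathsf{I}|=\bigotimes_{i\in\mathsf{N}}v^*_{i,\chi(i,\mathsf{I})}$, with $\chi(i,\mathsf{I})=1$ if $i\in\mathsf{I}$ and $0$ otherwise. $\mathscr{P}$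 is the free monoidal subcategory of finite-dimensional complex vector spaces whose objects are $V_{\mathsf{N}}$ for ordered subsets $\mathsf{N}\subset\mathbb{N}$ (usual tensor product) and whose morphisms are generated, under the usual composition/contraction and tensor product, by all morphisms $\operatorname{sPf}(M)$ and $\operatorname{sPf}^{\vee}(M)$. *)

theory Defs
  imports Complex_Main "HOL-Combinatorics.Permutations"
begin

text \<open>A skew-symmetric matrix with label set given by the list N is modelled as a
function M :: nat => nat => complex, whose relevant entries are those with both
labels in N.\<close>

definition skew_on :: "(nat \<Rightarrow> nat \<Rightarrow> complex) \<Rightarrow> nat list \<Rightarrow> bool" where
  "skew_on M N \<longleftrightarrow> (\<forall>i\<in>set N. \<forall>j\<in>set N. M i j = - M j i)"

text \<open>Pfaffian of the principal submatrix of M whose rows/columns are the labels L,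
taken in the order of the list L.  Pf of the empty matrix is 1, of odd size 0.\<close>

definition Pf :: "(nat \<Rightarrow> nat \<Rightarrow> complex) \<Rightarrow> nat list \<Rightarrow> complex" where
  "Pf M L = (let n = length L; m = n div 2 in
     if odd n then 0 else
       (\<Sum>p | p permutes {..<n}. of_int (sign p) *
           (\<Prod>i<m. M (L ! p (2*i)) (L ! p (2*i+1))))
       / (2 ^ m * fact m))"

text \<open>A basis vector of V_N is encoded by a bool list bs of length |N|
(bs!k = chi(N!k, I)).  sel N bs lists the labels of I in the order of N,
cosel N bs the labels of the complement.\<close>

definition sel :: "nat list \<Rightarrow> bool list \<Rightarrow> nat list" where
  "sel N bs = map fst (filter snd (zip N bs))"

definition cosel :: "nat list \<Rightarrow> bool list \<Rightarrow> nat list" where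
  "cosel N bs = map fst (filter (\<lambda>x. \<not> snd x) (zip N bs))"

text \<open>A morphism V_A \<rightarrow> V_B is a triple (A, B, F) where F out in is the matrix
entry <out| f |in>; entries outside the valid index lengths are normalised to 0.\<close>

type_synonym morph = "nat list \<times> nat list \<times> (bool list \<Rightarrow> bool list \<Rightarrow> complex)"

definition mk :: "nat list \<Rightarrow> nat list \<Rightarrow> (bool list \<Rightarrow> bool list \<Rightarrow> complex) \<Rightarrow> morph" where
  "mk A B F = (A, B, \<lambda>ou i. if length ou = length B \<and> length i = length A then F ou i else 0)"

definition states :: "nat list \<Rightarrow> bool list set" where
  "states N = {bs. length bs = length N}"

inductive_set catP :: "morph set" where
  ident: "distinct N \<Longrightarrow> mk N N (\<lambda>ou i. if ou = i then 1 else 0) \<in> catP"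
| sPf: "distinct N \<Longrightarrow> skew_on M N \<Longrightarrow> mk [] N (\<lambda>ou i. Pf M (sel N ou)) \<in> catP"
| sPf_dual: "distinct N \<Longrightarrow> skew_on M N \<Longrightarrow> mk N [] (\<lambda>ou i. Pf M (cosel N i)) \<in> catP"
| comp: "(A, B, F) \<in> catP \<Longrightarrow> (B, C, G) \<in> catP \<Longrightarrow>
          mk A C (\<lambda>ou i. \<Sum>b\<in>states B. G ou b * F b i) \<in> catP"
| tensor: "(A, B, F) \<in> catP \<Longrightarrow> (A', B', G) \<in> catP \<Longrightarrow>
          distinct (A @ A') \<Longrightarrow> distinct (B @ B') \<Longrightarrow>
          mk (A @ A') (B @ B')
             (\<lambda>ou i. F (take (length B) ou) (take (length A) i) *
                    G (drop (length B) ou) (drop (length A) i)) \<in> catP"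

definition dagger :: "morph \<Rightarrow> morph" where
  "dagger f = (case f of (A, B, F) \<Rightarrow> (B, A, \<lambda>ou i. cnj (F i ou)))"

end

theory Submission
  imports Defs
begin

text \<open>
  Composing with the bit flip |I\<rangle> \<mapsto> |A - I\<rangle> exchanges selected and complementary labels.
  Hence the bra with coefficients Pf(M restricted to I) is the generator sPf-dual of the
  relabelled matrix on a disjoint copy of A, precomposed with the flip from A to that copy;
  the ket with coefficients Pf(M restricted to A - I) arises in the same way from sPf. The flip
  on a single wire lies in P: contract the ket of a matrix pairing k with j against the bra of
  a matrix pairing i and k with l; all Pfaffians involved have size at most 2, and the only
  surviving terms have j = \<not> i. Tensoring gives the flip on all wires.

  Conjugating a Pfaffian conjugates the matrix, so the dagger of a ket generator is a bra of
  the above kind and vice versa; as the dagger commutes with composition and tensor product,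
  P is closed under it.
\<close>

lemma mk_cong:
  assumes "\<And>ou i. length ou = length B \<Longrightarrow> length i = length A \<Longrightarrow> F ou i = G ou i"
  shows "mk A B F = mk A B G"
  unfolding mk_def using assms by (auto intro!: ext)

lemma mk_in_catP_cong:
  assumes "mk A B G \<in> catP"
    and "\<And>ou i. length ou = length B \<Longrightarrow> length i = length A \<Longrightarrow> F ou i = G ou i"
  shows "mk A B F \<in> catP"
  using assms mk_cong by metis

lemma dagger_mk: "dagger (mk A B F) = mk B A (\<lambda>ou i. cnj (F i ou))"
  unfolding dagger_def mk_def by (auto intro!: ext)

lemma finite_states [simp]: "finite (states N)"
proof -
  have "states N = {xs. set xs \<subseteq> UNIV \<and> length xs = length N}"
    unfolding states_def by auto
  then show ?thesis
    using finite_lists_length_eq[of "UNIV :: bool set"] by simp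
qed

lemma states_Nil: "states [] = {[]}"
  unfolding states_def by auto

lemma sum_states_Cons:
  "(\<Sum>b\<in>states (x # N). f b) = (\<Sum>b\<in>states N. f (True # b)) + (\<Sum>b\<in>states N. f (False # b))"
proof -
  have split: "states (x # N) = Cons True ` states N \<union> Cons False ` states N"
    unfolding states_def by (auto simp: length_Suc_conv)
  show ?thesis
    unfolding split by (subst sum.union_disjoint) (auto simp: sum.reindex inj_on_def)
qed

lemma catP_comp_mk:
  assumes "mk A B F \<in> catP" "mk B C G \<in> catP"
  shows "mk A C (\<lambda>ou i. \<Sum>b\<in>states B. G ou b * F b i) \<in> catP"
proof -
  have "mk A C (\<lambda>ou i. \<Sum>b\<in>states B.
     (if length ou = length C \<and> length b = length B then G ou b else 0) *
     (if length b = length B \<and> length i = length A then F b i else 0)) \<in> catP"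
    using catP.comp[OF assms[unfolded mk_def]] unfolding mk_def .
  then show ?thesis
    by (rule mk_in_catP_cong) (auto simp: states_def intro!: sum.cong)
qed

lemma catP_tensor_mk:
  assumes "mk A B F \<in> catP" "mk A' B' G \<in> catP" "distinct (A @ A')" "distinct (B @ B')"
  shows "mk (A @ A') (B @ B')
           (\<lambda>ou i. F (take (length B) ou) (take (length A) i) *
                   G (drop (length B) ou) (drop (length A) i)) \<in> catP"
proof -
  have "mk (A @ A') (B @ B') (\<lambda>ou i.
     (if length (take (length B) ou) = length B \<and> length (take (length A) i) = length A
      then F (take (length B) ou) (take (length A) i) else 0) *
     (if length (drop (length B) ou) = length B' \<and> length (drop (length A) i) = length A'
      then G (drop (length B) ou) (drop (length A) i) else 0)) \<in> catP"
    using catP.tensor[OF assms(1,2)[unfolded mk_def] assms(3,4)] unfolding mk_def .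
  then show ?thesis
    by (rule mk_in_catP_cong) auto
qed

lemma Pf_Nil [simp]: "Pf M [] = 1"
  unfolding Pf_def by simp

lemma Pf_odd: "odd (length L) \<Longrightarrow> Pf M L = 0"
  unfolding Pf_def by simp

lemma permutes_lessThan_2: "{p. p permutes {..<2::nat}} = {id, transpose 0 1}"
proof -
  have "id \<noteq> transpose (0::nat) 1"
    by (metis id_apply transpose_apply_first zero_neq_one)
  then have "card {id, transpose (0::nat) 1} = card {p. p permutes {..<2::nat}}"
    using card_permutations[of "{..<2::nat}" 2] by simp
  moreover have "{id, transpose 0 1} \<subseteq> {p. p permutes {..<2::nat}}"
    by (auto intro: permutes_id permutes_swap_id)
  ultimately show ?thesis
    by (metis card_subset_eq finite_permutations finite_lessThan)
qed

lemma Pf_pair: "Pf M [x, y] = (M x y - M y x) / 2"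
proof -
  have two: "{..<Suc (Suc 0)} = {..<2::nat}" by simp
  have "id \<noteq> transpose (0::nat) 1"
    by (metis id_apply transpose_apply_first zero_neq_one)
  then show ?thesis
    unfolding Pf_def
    by (simp add: two permutes_lessThan_2 sign_swap_id diff_divide_distrib transpose_def)
qed

lemma Pf_cnj: "cnj (Pf M L) = Pf (\<lambda>x y. cnj (M x y)) L"
  unfolding Pf_def Let_def by (simp add: complex_cnj_divide)

lemma Pf_map: "Pf M (map f L) = Pf (\<lambda>x y. M (f x) (f y)) L"
proof -
  have "(\<Sum>p | p permutes {..<length L}. of_int (sign p) *
           (\<Prod>i<length L div 2. M (map f L ! p (2*i)) (map f L ! p (2*i+1))))
      = (\<Sum>p | p permutes {..<length L}. of_int (sign p) *
           (\<Prod>i<length L div 2. M (f (L ! p (2*i))) (f (L ! p (2*i+1)))))"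
  proof (intro sum.cong refl arg_cong2[where f = "(*)"] prod.cong)
    fix p i
    assume "p \<in> {p. p permutes {..<length L}}" "i \<in> {..<length L div 2}"
    then show "M (map f L ! p (2*i)) (map f L ! p (2*i+1)) = M (f (L ! p (2*i))) (f (L ! p (2*i+1)))"
      using permutes_in_image[of p "{..<length L}"] by simp
  qed
  then show ?thesis
    unfolding Pf_def Let_def by simp
qed

lemma skew_on_map: "skew_on M (map f A) \<longleftrightarrow> skew_on (\<lambda>x y. M (f x) (f y)) A"
  unfolding skew_on_def by simp

lemma skew_on_cnj: "skew_on M A \<Longrightarrow> skew_on (\<lambda>x y. cnj (M x y)) A"
  unfolding skew_on_def by (metis complex_cnj_minus)

lemma sel_map_Not: "sel N (map Not bs) = cosel N bs"
  by (induction N bs rule: list_induct2') (simp_all add: sel_def cosel_def)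

lemma cosel_map_Not: "cosel N (map Not bs) = sel N bs"
  by (induction N bs rule: list_induct2') (simp_all add: sel_def cosel_def)

lemma sel_map: "sel (map f N) bs = map f (sel N bs)"
  by (induction N bs rule: list_induct2') (simp_all add: sel_def)

lemma cosel_map: "cosel (map f N) bs = map f (cosel N bs)"
  by (induction N bs rule: list_induct2') (simp_all add: cosel_def)

definition flip :: "nat list \<Rightarrow> nat list \<Rightarrow> morph" where
  "flip A B = mk A B (\<lambda>ou i. if ou = map Not i then 1 else 0)"

lemma flip_single_in_catP:
  assumes "distinct [i, k, l, j]"
  shows "flip [i] [j] \<in> catP"
proof -
  define P :: "nat \<Rightarrow> nat \<Rightarrow> complex" where
    "P x y = (if x = i \<and> y = l \<or> x = k \<and> y = l then 1
              else if x = l \<and> y = i \<or> x = l \<and> y = k then -1 else 0)" for x y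
  define N :: "nat \<Rightarrow> nat \<Rightarrow> complex" where
    "N x y = (if x = k \<and> y = j then 1 else if x = j \<and> y = k then -1 else 0)" for x y
  have "skew_on P [i, k, l]" "skew_on N [k, l, j]"
    using assms unfolding skew_on_def P_def N_def by auto
  then have ket: "mk [i] [i, k, l, j]
                    (\<lambda>ou a. (if take 1 ou = take 1 a then 1 else 0) * Pf N (sel [k, l, j] (drop 1 ou)))
                  \<in> catP"
    and bra: "mk [i, k, l, j] [j]
                (\<lambda>ou a. Pf P (cosel [i, k, l] (take 3 a)) * (if ou = drop 3 a then 1 else 0))
              \<in> catP"
    using catP_tensor_mk[OF catP.ident[of "[i]"] catP.sPf[of "[k, l, j]" N]]
      catP_tensor_mk[OF catP.sPf_dual[of "[i, k, l]" P] catP.ident[of "[j]"]] assms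
    by (simp_all add: numeral_3_eq_3)
  show ?thesis
    unfolding flip_def
  proof (rule mk_in_catP_cong[OF catP_comp_mk[OF ket bra]])
    fix ou a :: "bool list"
    assume "length ou = length [j]" "length a = length [i]"
    then obtain x y where "ou = [x]" "a = [y]"
      by (auto simp: length_Suc_conv)
    then show "(if ou = map Not a then 1 else 0) =
        (\<Sum>b\<in>states [i, k, l, j]. Pf P (cosel [i, k, l] (take 3 b)) * (if ou = drop 3 b then 1 else 0) *
          ((if take 1 b = take 1 a then 1 else 0) * Pf N (sel [k, l, j] (drop 1 b))))"
      using assms
      by (cases x; cases y;
          simp add: sum_states_Cons states_Nil sel_def cosel_def Pf_pair Pf_odd P_def N_def numeral_3_eq_3)
  qed
qed

lemma flip_in_catP:
  assumes "distinct A" "distinct B" "list_all2 (\<noteq>) A B"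
  shows "flip A B \<in> catP"
  using assms
proof (induction A arbitrary: B)
  case Nil
  then show ?case
    unfolding flip_def by (auto intro: mk_in_catP_cong[OF catP.ident[of "[]"]])
next
  case (Cons a A)
  then obtain b B' where B: "B = b # B'" "a \<noteq> b" "list_all2 (\<noteq>) A B'"
    by (auto simp: list_all2_Cons1)
  have "flip [a] [b] \<in> catP"
    using B by (intro flip_single_in_catP[of a "a + b + 1" "a + b + 2" b]) auto
  moreover have "flip A B' \<in> catP"
    using Cons B by simp
  ultimately have "mk ([a] @ A) ([b] @ B')
       (\<lambda>ou i. (if take (length [b]) ou = map Not (take (length [a]) i) then 1 else 0) *
               (if drop (length [b]) ou = map Not (drop (length [a]) i) then 1 else 0)) \<in> catP"
    using Cons.prems B unfolding flip_def by (intro catP_tensor_mk) auto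
  then show ?case
    unfolding B flip_def append_Cons append_Nil
    by (rule mk_in_catP_cong) (auto simp: length_Suc_conv)
qed

lemma flip_shift_in_catP:
  assumes "distinct A"
  shows "flip A (map Suc A) \<in> catP" "flip (map Suc A) A \<in> catP"
  using assms by (auto intro!: flip_in_catP simp: distinct_map list_all2_conv_all_nth)

lemma sum_states_delta:
  assumes "length x = length N"
  shows "(\<Sum>b\<in>states N. f b * (if b = x then 1 else 0)) = (f x :: complex)"
proof -
  have "(\<Sum>b\<in>states N. f b * (if b = x then 1 else 0)) = (\<Sum>b\<in>states N. if b = x then f b else 0)"
    by (rule sum.cong) auto
  also have "\<dots> = f x"
    using assms by (simp only: sum.delta[OF finite_states]) (simp add: states_def)
  finally show ?thesis .
qed

lemma Pf_bra_in_catP: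
  assumes "distinct A" "skew_on M A"
  shows "mk A [] (\<lambda>ou i. Pf M (sel A i)) \<in> catP"
proof -
  define M' where "M' x y = M (x - 1) (y - 1)" for x y
  have "mk (map Suc A) [] (\<lambda>ou i. Pf M' (cosel (map Suc A) i)) \<in> catP"
    using assms by (intro catP.sPf_dual) (simp_all add: distinct_map skew_on_map M'_def)
  with flip_shift_in_catP(1)[OF assms(1)] show ?thesis
    unfolding flip_def
    by (rule mk_in_catP_cong[OF catP_comp_mk])
       (simp add: sum_states_delta cosel_map_Not cosel_map Pf_map M'_def)
qed

lemma Pf_ket_in_catP:
  assumes "distinct A" "skew_on M A"
  shows "mk [] A (\<lambda>ou i. Pf M (cosel A ou)) \<in> catP"
proof -
  define M' where "M' x y = M (x - 1) (y - 1)" for x y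
  have "mk [] (map Suc A) (\<lambda>ou i. Pf M' (sel (map Suc A) ou)) \<in> catP"
    using assms by (intro catP.sPf) (simp_all add: distinct_map skew_on_map M'_def)
  from this flip_shift_in_catP(2)[OF assms(1)] show ?thesis
    unfolding flip_def
  proof (rule mk_in_catP_cong[OF catP_comp_mk])
    fix ou :: "bool list"
    assume "length ou = length A"
    moreover have "ou = map Not b \<longleftrightarrow> b = map Not ou" for b
      by (auto simp: comp_def)
    ultimately show "Pf M (cosel A ou) = (\<Sum>b\<in>states (map Suc A).
        (if ou = map Not b then 1 else 0) * Pf M' (sel (map Suc A) b))"
      by (simp add: mult.commute sum_states_delta sel_map_Not sel_map Pf_map M'_def)
  qed
qed

lemma dagger_in_catP: "f \<in> catP \<Longrightarrow> dagger f \<in> catP"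
proof (induction rule: catP.induct)
  case (ident N)
  then show ?case
    unfolding dagger_mk by (rule mk_in_catP_cong[OF catP.ident]) auto
next
  case (sPf N M)
  then show ?case
    unfolding dagger_mk Pf_cnj by (intro Pf_bra_in_catP skew_on_cnj)
next
  case (sPf_dual N M)
  then show ?case
    unfolding dagger_mk Pf_cnj by (intro Pf_ket_in_catP skew_on_cnj)
next
  case (comp A B F C G)
  then have "mk C A (\<lambda>ou i. \<Sum>b\<in>states B. cnj (F b ou) * cnj (G i b)) \<in> catP"
    unfolding dagger_def by (auto intro: catP.comp)
  then show ?case
    unfolding dagger_mk by (rule mk_in_catP_cong) (simp add: mult.commute)
next
  case (tensor A B F A' B' G)
  then have "mk (B @ B') (A @ A')
       (\<lambda>ou i. cnj (F (take (length B) i) (take (length A) ou)) *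
               cnj (G (drop (length B) i) (drop (length A) ou))) \<in> catP"
    unfolding dagger_def by (auto intro: catP.tensor)
  then show ?case
    unfolding dagger_mk by (rule mk_in_catP_cong) simp
qed

theorem mainTheorem4:
  shows "(\<forall>M A. distinct A \<longrightarrow> skew_on M A \<longrightarrow>
            mk A [] (\<lambda>ou i. Pf M (sel A i)) \<in> catP \<and>
            mk [] A (\<lambda>ou i. Pf M (cosel A ou)) \<in> catP)
         \<and> (\<forall>f\<in>catP. dagger f \<in> catP)"
  using Pf_bra_in_catP Pf_ket_in_catP dagger_in_catP by blast

end
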